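(* Let $P(x)=3(x/\Upsilon)^2-2(x/\Upsilon)^3$, $Q(x)=1-P(\Upsilon+(1-\Upsilon)x)$, $\vartheta=10^{-10}$, $\Upsilon=0.64$. Then for all real $u\ge10$ and all real $v\ne0$ with $|v|\le5u$, $$\mathscr V(u,v)\le 1+e^{-u/2}.$$
   Context: Put $\kappa:=1-5\vartheta$, $w:=u+iv$, and define (sums over $j$ are finite since $P,Q$ are cubic) $\mathcal P(w):=e^{-2w\kappa}\sum_{j\ge2}\frac{P^{(j)}(0)}{(-2w\kappa)^j}$, $\mathcal Q(w):=e^{-2w\kappa(1-\Upsilon)}\sum_{j\ge2}\frac{Q^{(j)}(0)}{(-2w\kappa(1-\Upsilon))^j}$, $D(x):=\frac{iv}{w}P'(x)+\frac{u}{2w^2\kappa}P''(x)-\frac{u}{4w^3\kappa^2}P'''(x)$, $E(x):=\frac{u}{w}P'(x)+\frac{iv}{2w^2\kappa}P''(x)-\frac{iv}{4w^3\kappa^2}P'''(x)$. Then $\mathscr V(u,v):=\mathscr V_1+\mathscr V_2+\mathscr V_3$ with $\mathscr V_1:=1+\frac{1}{2u\kappa}\int_0^\Upsilon e^{-2u(1-x)\kappa}P'(x)^2dx$; $\mathscr V_2:=e^{-4u}\Big[-\frac{1}{2u\kappa}\int_0^\Upsilon e^{-2u(1-x)\kappa}|D(x)|^2dx+2\Re\Big\{\overline{\mathcal P(w)}\int_0^\Upsilon e^{-2iv(1-x)\kappa}D(x)\,dx\Big\}+\big(e^{2u\kappa(1-\Upsilon)}-e^{2u\kappa}\big)|\mathcal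 P(w)|^2+\big(1-e^{2u\kappa(1-\Upsilon)}\big)|\mathcal P(w)+\mathcal Q(w)|^2\Big]$; $\mathscr V_3:=-2\Re\Big\{e^{-2w}\Big[\frac{1}{-2iv\kappa}\int_0^\Upsilon e^{-2u(1-x)\kappa}\big(-2iv\kappa P(x)+P'(x)\big)E(x)\,dx+\mathcal P(w)\int_0^\Upsilon e^{2iv(1-x)\kappa}\big(-2iv\kappa P(x)+P'(x)\big)dx+\big(1-e^{2iv(1-\Upsilon)\kappa}\big)\big(\mathcal P(w)+\mathcal Q(w)\big)\Big]\Big\}$. *)

theory Defs
  imports "HOL-Analysis.Analysis"
begin

definition Ups :: real where "Ups = 64/100"
definition theta :: real where "theta = 1 / 10^10"
definition kappa :: real where "kappa = 1 - 5 * theta"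

definition Pf :: "real \<Rightarrow> real" where
  "Pf x = 3 * (x / Ups)^2 - 2 * (x / Ups)^3"
definition Qf :: "real \<Rightarrow> real" where
  "Qf x = 1 - Pf (Ups + (1 - Ups) * x)"

definition dP :: "nat \<Rightarrow> real \<Rightarrow> real" where "dP j = (deriv ^^ j) Pf"
definition dQ :: "nat \<Rightarrow> real \<Rightarrow> real" where "dQ j = (deriv ^^ j) Qf"

text \<open>Sums over j >= 2 are finite since P, Q are cubic: j ranges over 2..3.\<close>
definition calP :: "complex \<Rightarrow> complex" where
  "calP w = exp (- 2 * w * kappa) *
     (\<Sum>j\<in>{2..3}. complex_of_real (dP j 0) / (- 2 * w * kappa) ^ j)"
definition calQ :: "complex \<Rightarrow> complex" where
  "calQ w = exp (- 2 * w * kappa * (1 - Ups)) *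
     (\<Sum>j\<in>{2..3}. complex_of_real (dQ j 0) / (- 2 * w * kappa * (1 - Ups)) ^ j)"

definition Dfun :: "real \<Rightarrow> real \<Rightarrow> real \<Rightarrow> complex" where
  "Dfun u v x = (let w = Complex u v in
     \<i> * v / w * dP 1 x + u / (2 * w^2 * kappa) * dP 2 x - u / (4 * w^3 * kappa^2) * dP 3 x)"
definition Efun :: "real \<Rightarrow> real \<Rightarrow> real \<Rightarrow> complex" where
  "Efun u v x = (let w = Complex u v in
     u / w * dP 1 x + \<i> * v / (2 * w^2 * kappa) * dP 2 x - \<i> * v / (4 * w^3 * kappa^2) * dP 3 x)"

definition V1 :: "real \<Rightarrow> real \<Rightarrow> real" where
  "V1 u v = 1 + 1 / (2 * u * kappa) *
     integral {0..Ups} (\<lambda>x. exp (- 2 * u * (1 - x) * kappa) * (dP 1 x)^2)"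

definition V2 :: "real \<Rightarrow> real \<Rightarrow> real" where
  "V2 u v = (let w = Complex u v in exp (- 4 * u) *
     ( - 1 / (2 * u * kappa) *
         integral {0..Ups} (\<lambda>x. exp (- 2 * u * (1 - x) * kappa) * (cmod (Dfun u v x))^2)
       + 2 * Re (cnj (calP w) *
         integral {0..Ups} (\<lambda>x. exp (- 2 * \<i> * v * (1 - x) * kappa) * Dfun u v x))
       + (exp (2 * u * kappa * (1 - Ups)) - exp (2 * u * kappa)) * (cmod (calP w))^2
       + (1 - exp (2 * u * kappa * (1 - Ups))) * (cmod (calP w + calQ w))^2))"

definition V3 :: "real \<Rightarrow> real \<Rightarrow> real" where
  "V3 u v = (let w = Complex u v in - 2 * Re (exp (- 2 * w) *
     ( 1 / (- 2 * \<i> * v * kappa) *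
         integral {0..Ups} (\<lambda>x. complex_of_real (exp (- 2 * u * (1 - x) * kappa)) *
            (- 2 * \<i> * v * kappa * Pf x + dP 1 x) * Efun u v x)
       + calP w * integral {0..Ups} (\<lambda>x. exp (2 * \<i> * v * (1 - x) * kappa) *
            (- 2 * \<i> * v * kappa * Pf x + dP 1 x))
       + (1 - exp (2 * \<i> * v * (1 - Ups) * kappa)) * (calP w + calQ w))))"

definition VV :: "real \<Rightarrow> real \<Rightarrow> real" where
  "VV u v = V1 u v + V2 u v + V3 u v"

end

theory Submission
  imports Defs
begin

text \<open>On [0, Ups] the weight exp (-2u(1-x) kappa) is at most exp (-2u(1-Ups) kappa), which is at
most exp (-u/2); this gives V1 \<le> 1 + exp (-u/2) / 5. In V2 the factor exp (-4u) multiplies terms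
that are nonpositive except for a cross term of size O(1/u^2); calP and calQ are O(1/u^2) because
|w| \<ge> u. In V3 the only large factor is 1/(-2iv kappa). Writing E = P' + iv Pcomb (-1) 1 w splits
the integrand into a bounded part plus R/(-2iv kappa), where R = dP1_sq_integral u is real, so its
contribution is exp (-2u) sin (2v)/(2v) R/kappa, bounded because |sin t| \<le> |t|. Hence
V3 \<le> 24 exp (-2u), and for u \<ge> 10 the exponentially small terms fit into 4/5 exp (-u/2).\<close>

lemma higher_deriv_cubic:
  fixes a b c d :: real
  shows "(deriv ^^ 1) (\<lambda>x. a + b*x + c*x^2 + d*x^3) = (\<lambda>x. b + 2*c*x + 3*d*x^2)"
    and "(deriv ^^ 2) (\<lambda>x. a + b*x + c*x^2 + d*x^3) = (\<lambda>x. 2*c + 6*d*x)"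
    and "(deriv ^^ 3) (\<lambda>x. a + b*x + c*x^2 + d*x^3) = (\<lambda>x. 6*d)"
proof -
  have d1: "deriv (\<lambda>x. a + b*x + c*x^2 + d*x^3) = (\<lambda>x. b + 2*c*x + 3*d*x^2)"
    by (rule ext, rule DERIV_imp_deriv) (auto intro!: derivative_eq_intros)
  have d2: "deriv (\<lambda>x. b + 2*c*x + 3*d*x^2) = (\<lambda>x. 2*c + 6*d*x)"
    by (rule ext, rule DERIV_imp_deriv) (auto intro!: derivative_eq_intros)
  have d3: "deriv (\<lambda>x. 2*c + 6*d*x) = (\<lambda>x::real. 6*d)"
    by (rule ext, rule DERIV_imp_deriv) (auto intro!: derivative_eq_intros)
  show "(deriv ^^ 1) (\<lambda>x. a + b*x + c*x^2 + d*x^3) = (\<lambda>x. b + 2*c*x + 3*d*x^2)"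
    using d1 by simp
  show "(deriv ^^ 2) (\<lambda>x. a + b*x + c*x^2 + d*x^3) = (\<lambda>x. 2*c + 6*d*x)"
    using d1 d2 by (simp add: numeral_2_eq_2)
  show "(deriv ^^ 3) (\<lambda>x. a + b*x + c*x^2 + d*x^3) = (\<lambda>x. 6*d)"
    using d1 d2 d3 by (simp add: numeral_3_eq_3)
qed

lemma Pf_cubic: "Pf = (\<lambda>x. 0 + 0*x + (3/Ups^2)*x^2 + (-2/Ups^3)*x^3)"
  by (auto simp: Pf_def power_divide)

lemma Qf_cubic: "Qf = (\<lambda>x. 0 + 0*x + 3*((1-Ups)/Ups)^2*x^2 + 2*((1-Ups)/Ups)^3*x^3)"
  by (auto simp: Qf_def Pf_def Ups_def field_simps power2_eq_square power3_eq_cube)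

lemma dP_1: "dP 1 x = 6*x/Ups^2 - 6*x^2/Ups^3"
  and dP_2: "dP 2 x = 6/Ups^2 - 12*x/Ups^3"
  and dP_3: "dP 3 x = -12/Ups^3"
  unfolding dP_def Pf_cubic higher_deriv_cubic by (simp_all add: field_simps)

lemma dQ_2_0: "dQ 2 0 = 6*((1-Ups)/Ups)^2"
  and dQ_3_0: "dQ 3 0 = 12*((1-Ups)/Ups)^3"
  unfolding dQ_def Qf_cubic higher_deriv_cubic by simp_all

lemma kappa_bounds: "99/100 \<le> kappa" "kappa \<le> 1"
  by (simp_all add: kappa_def theta_def)

lemma Pf_dP_bounds:
  assumes "0 \<le> x" "x \<le> Ups"
  shows "0 \<le> Pf x" "Pf x \<le> 1" "0 \<le> dP 1 x" "dP 1 x \<le> 75/32"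
    and "\<bar>dP 2 x\<bar> \<le> 15" "\<bar>dP 3 x\<bar> \<le> 46"
proof -
  define t where "t = x / Ups"
  have t: "0 \<le> t" "t \<le> 1" using assms by (auto simp: t_def Ups_def)
  have P: "Pf x = t^2 * (3 - 2*t)" and P_compl: "1 - Pf x = (1 - t)^2 * (1 + 2*t)"
    by (simp_all add: Pf_def t_def power2_eq_square power3_eq_cube algebra_simps)
  have P1: "dP 1 x = 6/Ups * (t * (1 - t))" and P2: "dP 2 x = 6/Ups^2 * (1 - 2*t)"
    unfolding dP_1 dP_2 by (simp_all add: t_def Ups_def field_simps power2_eq_square)
  show "0 \<le> Pf x" using t unfolding P by simp
  have "0 \<le> (1 - t)^2 * (1 + 2*t)" using t by simp
  then show "Pf x \<le> 1" using P_compl by linarith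
  show "0 \<le> dP 1 x" using t unfolding P1 by (simp add: Ups_def)
  have "t * (1 - t) \<le> 1/4"
    using sum_squares_ge_zero[of "t - 1/2" 0] by (simp add: power2_eq_square algebra_simps)
  then show "dP 1 x \<le> 75/32" unfolding P1 by (simp add: Ups_def)
  have "\<bar>1 - 2*t\<bar> \<le> 1" using t by simp
  then show "\<bar>dP 2 x\<bar> \<le> 15" unfolding P2 abs_mult by (simp add: Ups_def power2_eq_square)
  show "\<bar>dP 3 x\<bar> \<le> 46" by (simp add: dP_3 Ups_def power3_eq_cube)
qed

lemma continuous_on_dP: "continuous_on A (dP 1)" "continuous_on A (dP 2)" "continuous_on A (dP 3)"
  unfolding dP_1[abs_def] dP_2[abs_def] dP_3[abs_def]
  by (intro continuous_intros; simp add: Ups_def)+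

lemma continuous_on_Pf: "continuous_on A Pf"
  unfolding Pf_def[abs_def] by (intro continuous_intros; simp add: Ups_def)

lemma norm_integral_le_const:
  fixes f :: "real \<Rightarrow> 'a::banach"
  assumes "0 \<le> B" "a \<le> b" "\<And>x. x \<in> {a..b} \<Longrightarrow> norm (f x) \<le> B"
  shows "norm (integral {a..b} f) \<le> B * (b - a)"
proof (cases "f integrable_on {a..b}")
  case True
  then have "(f has_integral integral {a..b} f) (cbox a b)" by (simp add: integrable_integral)
  from has_integral_bound[OF assms(1) this] assms show ?thesis by auto
qed (use assms in \<open>simp add: not_integrable_integral\<close>)

lemma integral_nonneg_unconditional:
  fixes f :: "real \<Rightarrow> real"
  assumes "\<And>x. x \<in> {a..b} \<Longrightarrow> 0 \<le> f x"
  shows "0 \<le> integral {a..b} f"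
  using assms integral_nonneg[of f "{a..b}"] not_integrable_integral[of f "{a..b}"] by fastforce

lemma norm_exp_mult_sum_inverse_powers_le:
  fixes y :: complex and c :: "nat \<Rightarrow> real"
  assumes "0 < r" "r \<le> cmod y"
  shows "cmod (exp y * (\<Sum>j\<in>J. of_real (c j) / y^j)) \<le> exp (Re y) * (\<Sum>j\<in>J. \<bar>c j\<bar> / r^j)"
proof -
  have "cmod (\<Sum>j\<in>J. of_real (c j) / y^j) \<le> (\<Sum>j\<in>J. \<bar>c j\<bar> / cmod y ^ j)"
    using norm_sum[of "\<lambda>j. of_real (c j) / y^j" J] by (simp add: norm_divide norm_power)
  also have "\<dots> \<le> (\<Sum>j\<in>J. \<bar>c j\<bar> / r^j)"
    using assms by (intro sum_mono divide_left_mono power_mono mult_pos_pos zero_less_power) auto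
  finally show ?thesis by (simp add: norm_mult mult_left_mono)
qed

lemma inverse_square_cube_le:
  fixes A B r u \<rho> :: real
  assumes "0 \<le> A" "0 \<le> B" "0 < \<rho>" "\<rho> * u \<le> r" "10 \<le> u"
  shows "A / r^2 + B / r^3 \<le> (A + B / (10 * \<rho>)) / \<rho>^2 / u^2"
proof -
  have "0 < \<rho> * u" "10 * \<rho> \<le> \<rho> * u"
    using assms by (simp_all add: mult.commute[of \<rho>] mult_right_mono)
  then have r: "0 < \<rho> * u" "10 * \<rho> \<le> r" "0 < r" using assms by linarith+
  have "B / r^3 = B / r / r^2" by (simp add: power2_eq_square power3_eq_cube)
  also have "\<dots> \<le> B / (10 * \<rho>) / r^2"
    using assms r by (intro divide_right_mono divide_left_mono) auto
  finally have "A / r^2 + B / r^3 \<le> (A + B / (10 * \<rho>)) / r^2" by (simp add: add_divide_distrib)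
  also have "\<dots> \<le> (A + B / (10 * \<rho>)) / (\<rho> * u)^2"
    using assms r by (intro divide_left_mono power_mono) auto
  finally show ?thesis by (simp add: power_mult_distrib)
qed

lemma two_three_set: "{2..3::nat} = {2, 3}"
  by auto

lemma calP_bound:
  assumes "10 \<le> u"
  shows "cmod (calP (Complex u v)) \<le> 5 / u^2"
proof -
  define y where "y = - 2 * Complex u v * kappa"
  have k: "99/100 \<le> kappa" "kappa \<le> 1" by (rule kappa_bounds)+
  have "u \<le> cmod (Complex u v)" using abs_Re_le_cmod[of "Complex u v"] by simp
  then have r: "2 * kappa * u \<le> cmod y" using k by (simp add: y_def norm_mult)
  have "cmod (calP (Complex u v)) \<le> exp (Re y) * (\<Sum>j\<in>{2..3}. \<bar>dP j 0\<bar> / (2 * kappa * u)^j)"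
    unfolding calP_def y_def[symmetric]
    by (rule norm_exp_mult_sum_inverse_powers_le) (use assms k r in auto)
  also have "\<dots> \<le> (\<Sum>j\<in>{2..3}. \<bar>dP j 0\<bar> / (2 * kappa * u)^j)"
    using assms k by (intro mult_left_le_one_le sum_nonneg) (auto simp: y_def)
  also have "\<dots> = \<bar>dP 2 0\<bar> / (2 * kappa * u)^2 + \<bar>dP 3 0\<bar> / (2 * kappa * u)^3"
    by (simp add: two_three_set)
  also have "\<dots> \<le> (\<bar>dP 2 0\<bar> + \<bar>dP 3 0\<bar> / (10 * (198/100))) / (198/100)^2 / u^2"
    using assms k by (intro inverse_square_cube_le) auto
  also have "\<dots> \<le> 5 / u^2"
    by (intro divide_right_mono) (simp_all add: dP_2 dP_3 Ups_def power2_eq_square power3_eq_cube)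
  finally show ?thesis .
qed

lemma calQ_bound:
  assumes "10 \<le> u"
  shows "cmod (calQ (Complex u v)) \<le> 5 / u^2"
proof -
  define y where "y = - 2 * Complex u v * kappa * (1 - Ups)"
  have k: "99/100 \<le> kappa" "kappa \<le> 1" by (rule kappa_bounds)+
  have "u \<le> cmod (Complex u v)" using abs_Re_le_cmod[of "Complex u v"] by simp
  then have r: "2 * kappa * (1 - Ups) * u \<le> cmod y" using k by (simp add: y_def norm_mult Ups_def)
  have "cmod (calQ (Complex u v))
      \<le> exp (Re y) * (\<Sum>j\<in>{2..3}. \<bar>dQ j 0\<bar> / (2 * kappa * (1 - Ups) * u)^j)"
    unfolding calQ_def y_def[symmetric]
    by (rule norm_exp_mult_sum_inverse_powers_le) (use assms k r in \<open>auto simp: Ups_def\<close>)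
  also have "\<dots> \<le> (\<Sum>j\<in>{2..3}. \<bar>dQ j 0\<bar> / (2 * kappa * (1 - Ups) * u)^j)"
    using assms k by (intro mult_left_le_one_le sum_nonneg) (auto simp: y_def Ups_def)
  also have "\<dots> = \<bar>dQ 2 0\<bar> / (2 * kappa * (1 - Ups) * u)^2
      + \<bar>dQ 3 0\<bar> / (2 * kappa * (1 - Ups) * u)^3"
    by (simp add: two_three_set)
  also have "\<dots> \<le> (\<bar>dQ 2 0\<bar> + \<bar>dQ 3 0\<bar> / (10 * (7128/10000))) / (7128/10000)^2 / u^2"
    using assms k by (intro inverse_square_cube_le) (auto simp: Ups_def)
  also have "\<dots> \<le> 5 / u^2"
    by (intro divide_right_mono) (simp_all add: dQ_2_0 dQ_3_0 Ups_def power2_eq_square power3_eq_cube)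
  finally show ?thesis .
qed

definition Pcomb :: "complex \<Rightarrow> complex \<Rightarrow> complex \<Rightarrow> real \<Rightarrow> complex" where
  "Pcomb a b w x =
     a / w * dP 1 x + b / (2 * w^2 * kappa) * dP 2 x - b / (4 * w^3 * kappa^2) * dP 3 x"

lemma Dfun_eq_Pcomb: "Dfun u v x = Pcomb (\<i> * v) u (Complex u v) x"
  by (simp add: Dfun_def Pcomb_def Let_def)

lemma Efun_eq_Pcomb: "Efun u v x = Pcomb u (\<i> * v) (Complex u v) x"
  by (simp add: Efun_def Pcomb_def Let_def)

lemma Efun_eq:
  assumes "Complex u v \<noteq> 0"
  shows "Efun u v x = dP 1 x + \<i> * v * Pcomb (-1) 1 (Complex u v) x"
proof -
  have "complex_of_real u = Complex u v - \<i> * v" by (simp add: complex_eq_iff)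
  then have u_div: "complex_of_real u / Complex u v = 1 - \<i> * v / Complex u v"
    using assms by (simp add: diff_divide_distrib)
  show ?thesis unfolding Efun_eq_Pcomb Pcomb_def u_div by (simp add: algebra_simps)
qed

lemma continuous_on_Pcomb: "continuous_on A (Pcomb a b w)"
  unfolding Pcomb_def[abs_def]
  by (intro continuous_intros continuous_on_of_real continuous_on_dP)

lemma norm_Pcomb_le:
  assumes w: "10 \<le> cmod w" and a: "cmod a \<le> \<alpha> * cmod w" and b: "cmod b \<le> \<beta> * cmod w"
    and x: "0 \<le> x" "x \<le> Ups"
  shows "cmod (Pcomb a b w x) \<le> \<alpha> * (75/32) + \<beta>"
proof -
  define W where "W = cmod w"
  have k: "99/100 \<le> kappa" "kappa \<le> 1" by (rule kappa_bounds)+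
  note P = Pf_dP_bounds[OF x]
  have W: "10 \<le> W" "0 < W" using w by (auto simp: W_def)
  have "0 \<le> \<alpha> * W" "0 \<le> \<beta> * W"
    using order_trans[OF norm_ge_zero a] order_trans[OF norm_ge_zero b] by (simp_all add: W_def)
  then have \<alpha>: "0 \<le> \<alpha>" and \<beta>: "0 \<le> \<beta>" using W by (simp_all add: zero_le_mult_iff)
  have t1: "cmod (a / w * dP 1 x) \<le> \<alpha> * (75/32)"
  proof -
    have "cmod (a / w * dP 1 x) = cmod a / W * dP 1 x"
      using P by (simp add: W_def norm_mult norm_divide)
    also have "\<dots> \<le> \<alpha> * (75/32)"
      using a W P \<alpha> by (intro mult_mono) (auto simp: W_def divide_le_eq)
    finally show ?thesis .
  qed
  have t2: "cmod (b / (2 * w^2 * kappa) * dP 2 x) \<le> \<beta> * (15 / (2 * 10 * (99/100)))"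
  proof -
    have "cmod (b / (2 * w^2 * kappa) * dP 2 x) = cmod b / W / (2 * W * kappa) * \<bar>dP 2 x\<bar>"
      using k by (simp add: W_def norm_mult norm_divide norm_power power2_eq_square)
    also have "\<dots> \<le> \<beta> / (2 * 10 * (99/100)) * 15"
      using b W k P \<beta> by (intro mult_mono frac_le) (auto simp: W_def divide_le_eq)
    finally show ?thesis by simp
  qed
  have t3: "cmod (b / (4 * w^3 * kappa^2) * dP 3 x) \<le> \<beta> * (46 / (4 * 10^2 * (99/100)^2))"
  proof -
    have "cmod (b / (4 * w^3 * kappa^2) * dP 3 x) = cmod b / W / (4 * W^2 * kappa^2) * \<bar>dP 3 x\<bar>"
      using k by (simp add: W_def norm_mult norm_divide norm_power power2_eq_square power3_eq_cube)
    also have "\<dots> \<le> \<beta> / (4 * 10^2 * (99/100)^2) * 46"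
      using b W k P \<beta> by (intro mult_mono frac_le power_mono) (auto simp: W_def divide_le_eq)
    finally show ?thesis by simp
  qed
  have "cmod (Pcomb a b w x) \<le> cmod (a / w * dP 1 x) + cmod (b / (2 * w^2 * kappa) * dP 2 x)
      + cmod (b / (4 * w^3 * kappa^2) * dP 3 x)"
    unfolding Pcomb_def
    by (rule order_trans[OF norm_triangle_ineq4 add_right_mono[OF norm_triangle_ineq]])
  also have "\<dots> \<le> \<alpha> * (75/32) + \<beta>" using t1 t2 t3 \<beta> by (simp add: power2_eq_square)
  finally show ?thesis .
qed

lemma cmod_Complex_ge:
  fixes u v :: real
  shows "\<bar>u\<bar> \<le> cmod (Complex u v)" "\<bar>v\<bar> \<le> cmod (Complex u v)"
  using abs_Re_le_cmod[of "Complex u v"] abs_Im_le_cmod[of "Complex u v"] by simp_all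

lemma norm_Dfun_le:
  assumes "10 \<le> u" "0 \<le> x" "x \<le> Ups"
  shows "cmod (Dfun u v x) \<le> 4"
proof -
  have "cmod (Dfun u v x) \<le> 1 * (75/32) + 1"
    unfolding Dfun_eq_Pcomb using assms cmod_Complex_ge[where u=u and v=v]
    by (intro norm_Pcomb_le) (auto simp: norm_mult)
  then show ?thesis by simp
qed

lemma norm_Efun_le:
  assumes "10 \<le> u" "0 \<le> x" "x \<le> Ups"
  shows "cmod (Efun u v x) \<le> 4"
proof -
  have "cmod (Efun u v x) \<le> 1 * (75/32) + 1"
    unfolding Efun_eq_Pcomb using assms cmod_Complex_ge[where u=u and v=v]
    by (intro norm_Pcomb_le) (auto simp: norm_mult)
  then show ?thesis by simp
qed

lemma norm_Pcomb_minus_one_one_le: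
  assumes "10 \<le> u" "0 \<le> x" "x \<le> Ups"
  shows "cmod (Pcomb (-1) 1 (Complex u v) x) \<le> 1/2"
proof -
  have "cmod (Pcomb (-1) 1 (Complex u v) x) \<le> 1/10 * (75/32) + 1/10"
    using assms cmod_Complex_ge[where u=u and v=v] by (intro norm_Pcomb_le) auto
  then show ?thesis by simp
qed

definition dP1_sq_integral :: "real \<Rightarrow> real" where
  "dP1_sq_integral u = integral {0..Ups} (\<lambda>x. exp (- 2 * u * (1 - x) * kappa) * (dP 1 x)^2)"

lemma dP1_sq_integral_nonneg: "0 \<le> dP1_sq_integral u"
  unfolding dP1_sq_integral_def by (rule integral_nonneg_unconditional) simp

lemma dP1_sq_integral_le:
  assumes "0 \<le> u"
  shows "dP1_sq_integral u \<le> exp (- 2 * u * (1 - Ups) * kappa) * (75/32)^2 * Ups"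
proof -
  have k: "99/100 \<le> kappa" by (rule kappa_bounds)
  have "norm (dP1_sq_integral u) \<le> exp (- 2 * u * (1 - Ups) * kappa) * (75/32)^2 * (Ups - 0)"
    unfolding dP1_sq_integral_def
  proof (rule norm_integral_le_const)
    fix x assume "x \<in> {0..Ups}"
    then have x: "0 \<le> x" "x \<le> Ups" by auto
    have "(dP 1 x)^2 \<le> (75/32)^2" using Pf_dP_bounds[OF x] by (intro power_mono) auto
    moreover have "exp (- 2 * u * (1 - x) * kappa) \<le> exp (- 2 * u * (1 - Ups) * kappa)"
      using x assms k by (auto intro!: mult_right_mono mult_left_mono)
    ultimately show "norm (exp (- 2 * u * (1 - x) * kappa) * (dP 1 x)^2)
        \<le> exp (- 2 * u * (1 - Ups) * kappa) * (75/32)^2"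
      by (simp add: mult_mono)
  qed (auto simp: Ups_def)
  then show ?thesis by simp
qed

lemma V1_bound:
  assumes "10 \<le> u"
  shows "V1 u v \<le> 1 + exp (- u / 2) / 5"
proof -
  have k: "99/100 \<le> kappa" "kappa \<le> 1" by (rule kappa_bounds)+
  have "V1 u v = 1 + dP1_sq_integral u / (2 * u * kappa)"
    by (simp add: V1_def dP1_sq_integral_def)
  also have "\<dots> \<le> 1 + exp (- 2 * u * (1 - Ups) * kappa) * (75/32)^2 * Ups / (2 * 10 * (99/100))"
    using assms k dP1_sq_integral_le[of u] dP1_sq_integral_nonneg[of u]
    by (intro add_left_mono frac_le mult_mono) auto
  also have "\<dots> \<le> 1 + exp (- u / 2) * (1 / 5)"
    unfolding mult.assoc times_divide_eq_right[symmetric] using assms k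
    by (intro add_left_mono mult_mono) (auto simp: Ups_def power2_eq_square)
  finally show ?thesis by simp
qed

lemma V2_bound:
  assumes u: "10 \<le> u"
  shows "V2 u v \<le> exp (- 4 * u)"
proof -
  have k: "99/100 \<le> kappa" "kappa \<le> 1" by (rule kappa_bounds)+
  define w where "w = Complex u v"
  define X where "X = integral {0..Ups} (\<lambda>x. exp (- 2 * u * (1 - x) * kappa) * (cmod (Dfun u v x))^2)"
  define I where "I = integral {0..Ups} (\<lambda>x. exp (- 2 * \<i> * v * (1 - x) * kappa) * Dfun u v x)"
  have "cmod I \<le> 4 * (Ups - 0)"
    unfolding I_def
  proof (rule norm_integral_le_const)
    fix x assume "x \<in> {0..Ups}"
    then show "cmod (exp (- 2 * \<i> * v * (1 - x) * kappa) * Dfun u v x) \<le> 4"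
      using norm_Dfun_le[OF u] by (simp add: norm_mult norm_exp_eq_Re)
  qed (simp_all add: Ups_def)
  moreover have "5 / u^2 \<le> 5 / 10^2"
    using u by (intro divide_left_mono power_mono) auto
  then have "cmod (calP w) \<le> 5 / 10^2"
    using calP_bound[OF u, of v] unfolding w_def by linarith
  ultimately have "cmod (cnj (calP w) * I) \<le> 5 / 10^2 * (4 * Ups)"
    unfolding norm_mult complex_mod_cnj by (intro mult_mono) auto
  then have cross: "2 * Re (cnj (calP w) * I) \<le> 2 * (5 / 10^2 * (4 * Ups))"
    using complex_Re_le_cmod[of "cnj (calP w) * I"] by linarith
  have "- 1 / (2 * u * kappa) * X \<le> 0"
    using u k integral_nonneg_unconditional[of 0 Ups] unfolding X_def
    by (intro mult_nonpos_nonneg) auto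
  moreover have "(exp (2 * u * kappa * (1 - Ups)) - exp (2 * u * kappa)) * (cmod (calP w))^2 \<le> 0"
    using u k by (intro mult_nonpos_nonneg) (auto simp: Ups_def)
  moreover have "(1 - exp (2 * u * kappa * (1 - Ups))) * (cmod (calP w + calQ w))^2 \<le> 0"
    using u k by (intro mult_nonpos_nonneg) (auto simp: Ups_def)
  ultimately have "- 1 / (2 * u * kappa) * X + 2 * Re (cnj (calP w) * I)
       + (exp (2 * u * kappa * (1 - Ups)) - exp (2 * u * kappa)) * (cmod (calP w))^2
       + (1 - exp (2 * u * kappa * (1 - Ups))) * (cmod (calP w + calQ w))^2 \<le> 1"
    using cross by (simp add: Ups_def)
  then show ?thesis
    unfolding V2_def Let_def w_def[symmetric] X_def[symmetric] I_def[symmetric]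
    by (simp add: mult_left_le)
qed

definition V3_regular_part :: "real \<Rightarrow> real \<Rightarrow> complex" where
  "V3_regular_part u v = integral {0..Ups} (\<lambda>x. complex_of_real (exp (- 2 * u * (1 - x) * kappa)) *
     (Pf x * Efun u v x - dP 1 x * Pcomb (-1) 1 (Complex u v) x / (2 * kappa)))"

lemma V3_integral_split:
  assumes "u \<noteq> 0" "v \<noteq> 0"
  shows "1 / (- 2 * \<i> * v * kappa) * integral {0..Ups}
            (\<lambda>x. complex_of_real (exp (- 2 * u * (1 - x) * kappa)) *
              (- 2 * \<i> * v * kappa * Pf x + dP 1 x) * Efun u v x)
         = V3_regular_part u v + complex_of_real (dP1_sq_integral u) / (- 2 * \<i> * v * kappa)"
proof -
  define c where "c = 1 / (- 2 * \<i> * v * kappa)"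
  define g where "g x = exp (- 2 * u * (1 - x) * kappa)" for x
  define f where "f x = complex_of_real (g x) *
      (Pf x * Efun u v x - dP 1 x * Pcomb (-1) 1 (Complex u v) x / (2 * kappa))" for x
  define G where "G x = g x * (dP 1 x)^2" for x
  have k: "kappa \<noteq> 0" using kappa_bounds(1) by linarith
  have w: "Complex u v \<noteq> 0" using assms by (simp add: complex_eq_iff)
  have pointwise: "c * (complex_of_real (g x) * (- 2 * \<i> * v * kappa * Pf x + dP 1 x) * Efun u v x)
      = f x + c * complex_of_real (G x)" for x
  proof -
    have ca: "c * (- 2 * \<i> * v * kappa) = 1" and civ: "c * (\<i> * v) = - 1 / (2 * kappa)"
      using assms k by (simp_all add: c_def field_simps)
    have "c * (complex_of_real (g x) * (- 2 * \<i> * v * kappa * Pf x + dP 1 x) * Efun u v x)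
        = g x * Pf x * (c * (- 2 * \<i> * v * kappa)) * Efun u v x
          + g x * dP 1 x * (c * dP 1 x + c * (\<i> * v) * Pcomb (-1) 1 (Complex u v) x)"
      unfolding Efun_eq[OF w] by (simp add: algebra_simps)
    also have "\<dots> = f x + c * complex_of_real (G x)"
      unfolding ca civ f_def G_def by (simp add: algebra_simps power2_eq_square)
    finally show ?thesis .
  qed
  have "continuous_on {0..Ups} f" "continuous_on {0..Ups} G"
    unfolding f_def[abs_def] G_def[abs_def] g_def Efun_eq_Pcomb
    using k by (intro continuous_intros continuous_on_Pf continuous_on_dP continuous_on_Pcomb; simp)+
  then have "(f has_integral V3_regular_part u v) {0..Ups}"
      and "(G has_integral dP1_sq_integral u) {0..Ups}"
    unfolding V3_regular_part_def dP1_sq_integral_def f_def[abs_def] G_def[abs_def] g_def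
    by (auto intro!: integrable_integral integrable_continuous_interval)
  then have "((\<lambda>x. f x + c * complex_of_real (G x)) has_integral
      V3_regular_part u v + c * complex_of_real (dP1_sq_integral u)) {0..Ups}"
    by (intro has_integral_add has_integral_mult_right has_integral_of_real)
  then show ?thesis
    unfolding c_def[symmetric] g_def[symmetric] integral_mult_right[symmetric] pointwise
    by (simp add: integral_unique c_def)
qed

lemma norm_V3_regular_part_le:
  assumes u: "10 \<le> u"
  shows "cmod (V3_regular_part u v) \<le> 3"
proof -
  have k: "99/100 \<le> kappa" "kappa \<le> 1" by (rule kappa_bounds)+
  have "cmod (V3_regular_part u v) \<le> (4 + 3/5) * (Ups - 0)"
    unfolding V3_regular_part_def
  proof (rule norm_integral_le_const)
    fix x assume "x \<in> {0..Ups}"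
    then have x: "0 \<le> x" "x \<le> Ups" by auto
    note P = Pf_dP_bounds[OF x]
    have g: "exp (- 2 * u * (1 - x) * kappa) \<le> 1" using x u k by (simp add: Ups_def)
    have "cmod (Pf x * Efun u v x) \<le> 1 * 4"
      unfolding norm_mult using P norm_Efun_le[OF u x] by (intro mult_mono) auto
    moreover have "cmod (dP 1 x * Pcomb (-1) 1 (Complex u v) x / (2 * kappa))
        \<le> 75/32 * (1/2) / (2 * (99/100))"
      unfolding norm_mult norm_divide using P norm_Pcomb_minus_one_one_le[OF u x] k
      by (intro frac_le mult_mono) auto
    ultimately have bracket:
      "cmod (Pf x * Efun u v x - dP 1 x * Pcomb (-1) 1 (Complex u v) x / (2 * kappa)) \<le> 4 + 3/5"
      using norm_triangle_ineq4[of "Pf x * Efun u v x"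
          "dP 1 x * Pcomb (-1) 1 (Complex u v) x / complex_of_real (2 * kappa)"]
      by (simp add: divide_simps)
    show "cmod (complex_of_real (exp (- 2 * u * (1 - x) * kappa)) *
        (Pf x * Efun u v x - dP 1 x * Pcomb (-1) 1 (Complex u v) x / (2 * kappa))) \<le> 4 + 3/5"
      using mult_mono[OF g bracket] by (simp add: norm_mult)
  qed (simp_all add: Ups_def)
  then show ?thesis by (simp add: Ups_def)
qed

lemma norm_V3_oscillatory_integral_le:
  "cmod (integral {0..Ups} (\<lambda>x. exp (2 * \<i> * v * (1 - x) * kappa) *
      (- 2 * \<i> * v * kappa * Pf x + dP 1 x))) \<le> (2 * \<bar>v\<bar> + 75/32) * Ups"
    (is "cmod (integral _ ?f) \<le> _")
proof -
  have k: "99/100 \<le> kappa" "kappa \<le> 1" by (rule kappa_bounds)+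
  have "cmod (integral {0..Ups} ?f) \<le> (2 * \<bar>v\<bar> + 75/32) * (Ups - 0)"
  proof (rule norm_integral_le_const)
    fix x assume "x \<in> {0..Ups}"
    then have x: "0 \<le> x" "x \<le> Ups" by auto
    note P = Pf_dP_bounds[OF x]
    have "cmod (- 2 * \<i> * v * kappa * Pf x + dP 1 x) \<le> 2 * \<bar>v\<bar> * kappa * Pf x + dP 1 x"
      using norm_triangle_ineq[of "- 2 * \<i> * v * kappa * Pf x" "complex_of_real (dP 1 x)"] P k
      by (simp add: norm_mult)
    also have "\<dots> \<le> 2 * \<bar>v\<bar> * 1 * 1 + 75/32"
      using P k by (intro add_mono mult_mono) auto
    finally show "cmod (exp (2 * \<i> * v * (1 - x) * kappa) * (- 2 * \<i> * v * kappa * Pf x + dP 1 x))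
        \<le> 2 * \<bar>v\<bar> + 75/32"
      by (simp add: norm_mult norm_exp_eq_Re)
  qed (simp_all add: Ups_def)
  then show ?thesis by simp
qed

lemma Re_exp_mult_div_imaginary:
  fixes R c :: real
  assumes "v \<noteq> 0" "c \<noteq> 0"
  shows "Re (exp (- 2 * Complex u v) * (complex_of_real R / (- 2 * \<i> * v * c)))
       = exp (- 2 * u) * (sin (2 * v) / (2 * v)) * (R / c)"
proof -
  have "complex_of_real R / (- 2 * \<i> * v * c) = \<i> * complex_of_real (R / (2 * v * c))"
    using assms by (simp add: field_simps)
  then show ?thesis by (simp add: Re_exp Im_exp field_simps)
qed

lemma norm_V3_boundary_terms_le:
  assumes u: "10 \<le> u" and v: "\<bar>v\<bar> \<le> 5 * u"
  shows "cmod (calP (Complex u v) * integral {0..Ups} (\<lambda>x. exp (2 * \<i> * v * (1 - x) * kappa) *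
                 (- 2 * \<i> * v * kappa * Pf x + dP 1 x))
             + (1 - exp (2 * \<i> * v * (1 - Ups) * kappa)) * (calP (Complex u v) + calQ (Complex u v))) \<le> 5"
    (is "cmod (calP _ * ?I + ?T) \<le> 5")
proof -
  have P: "cmod (calP (Complex u v)) \<le> 5 / u^2" and Q: "cmod (calQ (Complex u v)) \<le> 5 / u^2"
    using calP_bound[OF u] calQ_bound[OF u] by auto
  have u2: "10 * u \<le> u^2" "0 < u^2" using u by (simp_all add: power2_eq_square)
  have "cmod (calP (Complex u v) * ?I) \<le> 5 / u^2 * ((10 * u + 75/32) * Ups)"
    unfolding norm_mult using P norm_V3_oscillatory_integral_le[of v] v
    by (intro mult_mono) (auto simp: Ups_def)
  also have "\<dots> = (32 * u + 15/2) / u^2" using u by (simp add: Ups_def field_simps)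
  also have "\<dots> \<le> 4" using u u2 by (simp add: divide_le_eq)
  finally have osc: "cmod (calP (Complex u v) * ?I) \<le> 4" .
  have "cmod (1 - exp (2 * \<i> * v * (1 - Ups) * kappa)) \<le> 2"
    using norm_triangle_ineq4[of 1 "exp (2 * \<i> * v * (1 - Ups) * kappa)"] by (simp add: norm_exp_eq_Re)
  moreover have "cmod (calP (Complex u v) + calQ (Complex u v)) \<le> 10 / u^2"
    using P Q norm_triangle_ineq[of "calP (Complex u v)" "calQ (Complex u v)"] by simp
  ultimately have "cmod ?T \<le> 2 * (10 / u^2)"
    unfolding norm_mult by (intro mult_mono) auto
  also have "\<dots> \<le> 1" using u u2 by (simp add: divide_le_eq)
  finally show ?thesis using osc norm_triangle_ineq[of "calP (Complex u v) * ?I" ?T] by linarith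
qed

lemma V3_singular_term_le:
  assumes u: "10 \<le> u" and v: "v \<noteq> 0"
  shows "- 2 * Re (exp (- 2 * Complex u v) *
            (complex_of_real (dP1_sq_integral u) / (- 2 * \<i> * v * kappa))) \<le> 8 * exp (- 2 * u)"
proof -
  define s where "s = sin (2 * v) / (2 * v)"
  define r where "r = dP1_sq_integral u / kappa"
  have k: "99/100 \<le> kappa" "kappa \<le> 1" by (rule kappa_bounds)+
  have "exp (- 2 * u * (1 - Ups) * kappa) * (75/32)^2 * Ups \<le> 1 * (75/32)^2 * Ups"
    using u k by (intro mult_right_mono) (auto simp: Ups_def)
  then have "dP1_sq_integral u \<le> (75/32)^2 * Ups" using dP1_sq_integral_le[of u] u by linarith
  then have r: "0 \<le> r" "r \<le> 4"
    using k dP1_sq_integral_nonneg[of u] by (simp_all add: r_def divide_le_eq Ups_def power2_eq_square)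
  have "\<bar>s\<bar> \<le> 1" using v abs_sin_x_le_abs_x[of "2 * v"] by (simp add: s_def)
  then have "- s * r \<le> 1 * 4"
    using r mult_right_mono[of "- s" "\<bar>s\<bar>" r] mult_mono[of "\<bar>s\<bar>" 1 r 4] by force
  then have "exp (- 2 * u) * (- s * r) \<le> exp (- 2 * u) * 4" by (intro mult_left_mono) auto
  then show ?thesis
    using Re_exp_mult_div_imaginary[OF v, of kappa u "dP1_sq_integral u"] k
    by (simp add: s_def r_def algebra_simps)
qed

lemma V3_bound:
  assumes u: "10 \<le> u" and v: "v \<noteq> 0" "\<bar>v\<bar> \<le> 5 * u"
  shows "V3 u v \<le> 24 * exp (- 2 * u)"
proof -
  define w where "w = Complex u v"
  define B where "B = calP w * integral {0..Ups} (\<lambda>x. exp (2 * \<i> * v * (1 - x) * kappa) *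
                 (- 2 * \<i> * v * kappa * Pf x + dP 1 x))
             + (1 - exp (2 * \<i> * v * (1 - Ups) * kappa)) * (calP w + calQ w)"
  have "u \<noteq> 0" using u by simp
  have "V3 u v = - 2 * Re (exp (- 2 * w) * (V3_regular_part u v + B))
      - 2 * Re (exp (- 2 * w) * (complex_of_real (dP1_sq_integral u) / (- 2 * \<i> * v * kappa)))"
    unfolding V3_def Let_def w_def[symmetric] V3_integral_split[OF \<open>u \<noteq> 0\<close> v(1)] B_def
    by (simp add: algebra_simps)
  moreover have "cmod (V3_regular_part u v + B) \<le> 3 + 5"
    using norm_V3_regular_part_le[OF u, of v] norm_V3_boundary_terms_le[OF u v(2)]
      norm_triangle_ineq[of "V3_regular_part u v" B]
    unfolding B_def w_def by linarith
  then have "exp (- 2 * u) * cmod (V3_regular_part u v + B) \<le> exp (- 2 * u) * 8"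
    by (intro mult_left_mono) auto
  moreover have "- Re (exp (- 2 * w) * (V3_regular_part u v + B))
      \<le> exp (- 2 * u) * cmod (V3_regular_part u v + B)"
    using abs_Re_le_cmod[of "exp (- 2 * w) * (V3_regular_part u v + B)"]
    by (simp add: norm_mult w_def)
  ultimately show ?thesis
    using V3_singular_term_le[OF u v(1)] unfolding w_def by linarith
qed

lemma exp_neg_two_mul_le:
  fixes u :: real
  assumes "10 \<le> u"
  shows "32 * exp (- 2 * u) \<le> exp (- u / 2)"
proof -
  have "32 \<le> (17/2 :: real)^2" by (simp add: power2_eq_square)
  also have "\<dots> \<le> (1 + (3/2 * u) / 2)^2" using assms by (intro power_mono) auto
  also have "\<dots> \<le> exp (3/2 * u)"
    using exp_ge_one_plus_x_over_n_power_n[of 2 "3/2 * u"] assms by simp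
  finally have "32 * exp (- 2 * u) \<le> exp (3/2 * u) * exp (- 2 * u)" by simp
  also have "\<dots> = exp (- u / 2)" by (simp flip: exp_add)
  finally show ?thesis .
qed

theorem lemma5p6:
  fixes u v :: real
  assumes "u \<ge> 10" and "v \<noteq> 0" and "\<bar>v\<bar> \<le> 5 * u"
  shows "VV u v \<le> 1 + exp (- u / 2)"
proof -
  have "VV u v \<le> (1 + exp (- u / 2) / 5) + exp (- 4 * u) + 24 * exp (- 2 * u)"
    unfolding VV_def using V1_bound V2_bound V3_bound assms by (intro add_mono)
  moreover have "exp (- 4 * u) \<le> exp (- 2 * u)" using assms by simp
  ultimately show ?thesis
    using exp_neg_two_mul_le[OF assms(1)] exp_gt_zero[of "- u / 2"] by linarith
qed

end
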